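(* Let $W$ be the Witt algebra with basis $\{x_n\mid n\in\mathbb{Z}\}$ and bracket $[x_m,x_n]=(n-m)x_{m+n}$, and let $V$ be a left-symmetric algebra structure on the underlying space of $W$ with product $x_mx_n=f(m,n)x_{m+n}$ for some $f:\mathbb{Z}\times\mathbb{Z}\to\mathbb{C}$ and with $x_mx_n-x_nx_m=(n-m)x_{m+n}$. Regard $V$ as a $W$-module via left multiplication, $x_m\cdot v=x_mv$. Then $V$ is not isomorphic as a $W$-module to $A'_{0,1}$, the $W$-module with basis $\{v_n\mid n\in\mathbb{Z}\setminus\{0\}\}$ and action $x_iv_n=(n+i)v_{n+i}$ (where $v_0:=0$).
   Context: A left-symmetric algebra is a vector space with bilinear product satisfying $(xy)z-x(yz)=(yx)z-y(xz)$; left multiplication then gives a representation of the commutator Lie algebra. *)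

theory Defs
  imports Complex_Main
begin

text \<open>Vectors in a complex vector space with basis indexed by the integers are
  represented by their coefficient functions, which are finitely supported.\<close>

definition fin_supp :: "(int \<Rightarrow> complex) \<Rightarrow> bool" where
  "fin_supp g \<longleftrightarrow> finite {n. g n \<noteq> 0}"

definition V_space :: "(int \<Rightarrow> complex) set" where
  "V_space = {g. fin_supp g}"

text \<open>Left-symmetry identity (xy)z - x(yz) = (yx)z - y(xz) on basis elements,
  and the commutator condition x_m x_n - x_n x_m = (n-m) x_(m+n).\<close>
definition left_symmetric_coeffs :: "(int \<times> int \<Rightarrow> complex) \<Rightarrow> bool" where
  "left_symmetric_coeffs f \<longleftrightarrow>
     (\<forall>m n k. f (m, n) * f (m + n, k) - f (n, k) * f (m, n + k)
            = f (n, m) * f (n + m, k) - f (m, k) * f (n, m + k))"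

definition witt_compatible :: "(int \<times> int \<Rightarrow> complex) \<Rightarrow> bool" where
  "witt_compatible f \<longleftrightarrow> (\<forall>m n. f (m, n) - f (n, m) = of_int (n - m))"

text \<open>W-action on V by left multiplication: x_m . v = x_m v.\<close>
definition V_act :: "(int \<times> int \<Rightarrow> complex) \<Rightarrow> int \<Rightarrow> (int \<Rightarrow> complex) \<Rightarrow> (int \<Rightarrow> complex)" where
  "V_act f m g = (\<lambda>k. f (m, k - m) * g (k - m))"

text \<open>The module A'_{0,1}: basis v_n, n \<noteq> 0, with x_i v_n = (n+i) v_(n+i), v_0 = 0.\<close>
definition A01_space :: "(int \<Rightarrow> complex) set" where
  "A01_space = {g. fin_supp g \<and> g 0 = 0}"

definition A01_act :: "int \<Rightarrow> (int \<Rightarrow> complex) \<Rightarrow> (int \<Rightarrow> complex)" where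
  "A01_act i g = (\<lambda>k. of_int k * g (k - i))"

definition W_module_iso ::
  "(int \<Rightarrow> complex) set \<Rightarrow> (int \<Rightarrow> (int \<Rightarrow> complex) \<Rightarrow> (int \<Rightarrow> complex)) \<Rightarrow>
   (int \<Rightarrow> complex) set \<Rightarrow> (int \<Rightarrow> (int \<Rightarrow> complex) \<Rightarrow> (int \<Rightarrow> complex)) \<Rightarrow>
   ((int \<Rightarrow> complex) \<Rightarrow> (int \<Rightarrow> complex)) \<Rightarrow> bool" where
  "W_module_iso M actM N actN \<phi> \<longleftrightarrow>
     bij_betw \<phi> M N \<and>
     (\<forall>u\<in>M. \<forall>v\<in>M. \<phi> (\<lambda>k. u k + v k) = (\<lambda>k. \<phi> u k + \<phi> v k)) \<and>
     (\<forall>c. \<forall>u\<in>M. \<phi> (\<lambda>k. c * u k) = (\<lambda>k. c * \<phi> u k)) \<and>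
     (\<forall>m. \<forall>u\<in>M. \<phi> (actM m u) = actN m (\<phi> u))"

end

theory Submission
  imports Defs
begin

text \<open>On V the element x_0 acts diagonally, x_0 x_n = f(0,n) x_n, while on A'_{0,1} it acts by
  x_0 v_j = j v_j, with one-dimensional eigenspaces for the nonzero integers j. Hence an isomorphism
  sends every x_n to a nonzero multiple of v_j with j = f(0,n) \<noteq> 0.
  For x_0 \<mapsto> v_a, the element x_{-a} kills v_a, hence x_{-a} x_0 = 0, i.e. f(-a,0) = 0, and the
  Witt relation gives f(0,-a) = -a, so x_{-a} \<mapsto> v_{-a}. But x_{-2a} x_0 = f(-2a,0) x_{-2a} is sent
  to -a v_{-a} \<noteq> 0, a multiple of the image of x_{-a}, contradicting injectivity.\<close>

definition basis_vec :: "int \<Rightarrow> int \<Rightarrow> complex" where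
  "basis_vec n = (\<lambda>k. if k = n then 1 else 0)"

lemma scaled_basis_vec_in_V_space: "(\<lambda>k. c * basis_vec n k) \<in> V_space"
proof -
  have "{k. c * basis_vec n k \<noteq> 0} \<subseteq> {n}"
    by (auto simp: basis_vec_def)
  then show ?thesis
    by (auto simp: V_space_def fin_supp_def intro: finite_subset)
qed

lemma basis_vec_in_V_space: "basis_vec n \<in> V_space"
  using scaled_basis_vec_in_V_space[of 1 n] by simp

lemma zero_in_V_space: "(\<lambda>k. 0) \<in> V_space"
  using scaled_basis_vec_in_V_space[of 0 0] by simp

lemma V_act_basis_vec: "V_act f m (basis_vec n) = (\<lambda>k. f (m, n) * basis_vec (m + n) k)"
  by (auto simp: V_act_def basis_vec_def)

lemma A01_act_scaled_basis_vec:
  "A01_act i (\<lambda>k. c * basis_vec n k) = (\<lambda>k. c * of_int (n + i) * basis_vec (n + i) k)"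
  by (auto simp: A01_act_def basis_vec_def)

lemma A01_eigenvector_support:
  assumes "A01_act 0 g = (\<lambda>k. c * g k)" and "of_int k \<noteq> c"
  shows "g k = 0"
proof -
  have "(of_int k - c) * g k = 0"
    using fun_cong[OF assms(1), of k] by (simp add: A01_act_def algebra_simps)
  then show ?thesis
    using assms(2) by simp
qed

lemma
  assumes "W_module_iso M actM N actN \<phi>"
  shows W_module_iso_inj_on: "inj_on \<phi> M"
    and W_module_iso_in_image: "u \<in> M \<Longrightarrow> \<phi> u \<in> N"
    and W_module_iso_scale: "u \<in> M \<Longrightarrow> \<phi> (\<lambda>k. c * u k) = (\<lambda>k. c * \<phi> u k)"
    and W_module_iso_act: "u \<in> M \<Longrightarrow> \<phi> (actM m u) = actN m (\<phi> u)"
  using assms by (auto simp: W_module_iso_def bij_betw_def)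

lemma W_module_iso_eq_zero_iff:
  assumes iso: "W_module_iso M actM N actN \<phi>" and "(\<lambda>k. 0) \<in> M" and "u \<in> M"
  shows "\<phi> u = (\<lambda>k. 0) \<longleftrightarrow> u = (\<lambda>k. 0)"
proof -
  have "\<phi> (\<lambda>k. 0) = (\<lambda>k. 0)"
    using W_module_iso_scale[OF iso \<open>(\<lambda>k. 0) \<in> M\<close>, of 0] by simp
  then show ?thesis
    using inj_onD[OF W_module_iso_inj_on[OF iso]] assms(2,3) by metis
qed

lemma W_module_iso_image_basis_vec:
  assumes iso: "W_module_iso V_space (V_act f) A01_space A01_act \<phi>"
  obtains j s where "f (0, n) = of_int j" and "j \<noteq> 0" and "s \<noteq> 0"
    and "\<phi> (basis_vec n) = (\<lambda>k. s * basis_vec j k)"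
proof -
  let ?u = "\<phi> (basis_vec n)"
  have "A01_act 0 ?u = \<phi> (V_act f 0 (basis_vec n))"
    by (rule W_module_iso_act[OF iso basis_vec_in_V_space, symmetric])
  also have "\<dots> = \<phi> (\<lambda>k. f (0, n) * basis_vec n k)"
    by (simp add: V_act_basis_vec)
  also have "\<dots> = (\<lambda>k. f (0, n) * ?u k)"
    by (rule W_module_iso_scale[OF iso basis_vec_in_V_space])
  finally have eigen: "A01_act 0 ?u = (\<lambda>k. f (0, n) * ?u k)" .
  have "basis_vec n \<noteq> (\<lambda>k. 0)"
    by (metis basis_vec_def zero_neq_one)
  then obtain j where j: "?u j \<noteq> 0"
    using W_module_iso_eq_zero_iff[OF iso zero_in_V_space basis_vec_in_V_space] by auto
  have "of_int j = f (0, n)"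
    using A01_eigenvector_support[OF eigen, of j] j by blast
  then have fj: "f (0, n) = of_int j" ..
  have "?u \<in> A01_space"
    by (rule W_module_iso_in_image[OF iso basis_vec_in_V_space])
  then have "j \<noteq> 0"
    using j by (auto simp: A01_space_def)
  moreover have "?u = (\<lambda>k. ?u j * basis_vec j k)"
  proof
    fix k
    show "?u k = ?u j * basis_vec j k"
      using A01_eigenvector_support[OF eigen, of k] fj by (cases "k = j") (simp_all add: basis_vec_def)
  qed
  ultimately show ?thesis
    using that fj j by blast
qed

theorem theorem3p5:
  fixes f :: "int \<times> int \<Rightarrow> complex"
  assumes "left_symmetric_coeffs f"
    and "witt_compatible f"
  shows "\<not> (\<exists>\<phi>. W_module_iso V_space (V_act f) A01_space A01_act \<phi>)"
proof
  assume "\<exists>\<phi>. W_module_iso V_space (V_act f) A01_space A01_act \<phi>"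
  then obtain \<phi> where iso: "W_module_iso V_space (V_act f) A01_space A01_act \<phi>" ..
  note act = W_module_iso_act[OF iso basis_vec_in_V_space]
  obtain a \<alpha> where "f (0, 0) = of_int a" and "a \<noteq> 0" and "\<alpha> \<noteq> 0"
    and x0: "\<phi> (basis_vec 0) = (\<lambda>k. \<alpha> * basis_vec a k)"
    by (rule W_module_iso_image_basis_vec[OF iso])
  have "\<phi> (V_act f (-a) (basis_vec 0)) = (\<lambda>k. 0)"
    using act x0 by (simp add: A01_act_scaled_basis_vec)
  then have "V_act f (-a) (basis_vec 0) = (\<lambda>k. 0)"
    using W_module_iso_eq_zero_iff[OF iso zero_in_V_space] by (simp add: V_act_basis_vec
        scaled_basis_vec_in_V_space)
  from fun_cong[OF this, of "-a"] have "f (-a, 0) = 0"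
    by (simp add: V_act_def basis_vec_def)
  moreover have "f (0, -a) - f (-a, 0) = of_int (-a - 0)"
    using assms(2) unfolding witt_compatible_def by blast
  ultimately have "f (0, -a) = of_int (-a)"
    by simp
  obtain j s where "f (0, -a) = of_int j" and "s \<noteq> 0"
    and xj: "\<phi> (basis_vec (-a)) = (\<lambda>k. s * basis_vec j k)"
    by (rule W_module_iso_image_basis_vec[OF iso])
  with \<open>f (0, -a) = of_int (-a)\<close> have "j = -a"
    by (metis of_int_eq_iff)
  with xj have xma: "\<phi> (basis_vec (-a)) = (\<lambda>k. s * basis_vec (-a) k)"
    by simp
  define c where "c = - \<alpha> * of_int a / s"
  have "\<phi> (V_act f (-2*a) (basis_vec 0)) = (\<lambda>k. \<alpha> * of_int (-a) * basis_vec (-a) k)"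
    using act x0 by (simp add: A01_act_scaled_basis_vec)
  also have "\<dots> = (\<lambda>k. c * \<phi> (basis_vec (-a)) k)"
    using xma \<open>s \<noteq> 0\<close> by (simp add: c_def mult.assoc)
  also have "\<dots> = \<phi> (\<lambda>k. c * basis_vec (-a) k)"
    by (rule W_module_iso_scale[OF iso basis_vec_in_V_space, symmetric])
  finally have "V_act f (-2*a) (basis_vec 0) = (\<lambda>k. c * basis_vec (-a) k)"
    using inj_onD[OF W_module_iso_inj_on[OF iso]]
    by (simp add: V_act_basis_vec scaled_basis_vec_in_V_space)
  from fun_cong[OF this, of "-a"] have "c = 0"
    using \<open>a \<noteq> 0\<close> by (simp add: V_act_def basis_vec_def)
  then show False
    using \<open>a \<noteq> 0\<close> \<open>\<alpha> \<noteq> 0\<close> \<open>s \<noteq> 0\<close> by (simp add: c_def)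
qed

end
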